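(* In the HTLC game described in the context, choosing to include $tx^{h}_{\mathcal{B}}$ is a unique subgame perfect equilibrium in the last-round subgame $G^{H}(T,\mathrm{red})$, and the utility of miner $i$ when doing so is $\lambda_i f^{h}_{\mathcal{B}}$.
   Context: Blockchain model: $n$ miners; miner $i$ has mining power $\lambda_i>0$ with $0<\lambda_i<1$, $\sum_i\lambda_i=1$, $\lambda_{\min}=\min_i\lambda_i$. Each round exactly one miner is chosen, miner $i$ with probability $\lambda_i$, and creates a block containing one transaction of her choice, receiving its fee. An unrelated transaction offering base fee $f$ is always available. A contract can be redeemed at most once. Miners are rational, non-myopic, with perfect information, maximizing expected tokens. HTLC: a contract holding $v^{\mathrm{dep}}$ tokens initiated in block $b_j$, with digest $dig_a=H(pre_a)$ and timeout $T$, redeemable via htlc-A (signature of $\mathcal{A}$ and $pre_a$; any block) or htlc-B (signature of $\mathcal{B}$; only at least $T$ blocks after initiation). The HTLC game has $T$ rounds creating $b_{j+1},\dots,b_{j+T}$. $\mathcal{A}$ publishes $tx^{h}_{\mathcal{A}}$ (redeems via htlc-A, fee $f^{h}_{\mathcal{A}}$, $f<f^{h}_{\mathcal{A}}<v^{\mathrm{dep}}$) in the first round, and $\mathcal{B}$ publishes $tx^{h}_{\mathcal{B}}$ (redeems via htlc-B, fee $f^{h}_{\mathcal{B}}<v^{\mathrm{dep}}$) with $f^{h}_{\mathcal{B}}>\frac{f^{h}_{\mathcal{A}}-f}{\lambda_{\min}}+f$. A miner can include an unrelated transaction in any round; $tx^{h}_{\mathcal{A}}$ in any round while the HTLC is unredeemed;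 $tx^{h}_{\mathcal{B}}$ only in round $T$ while the HTLC is unredeemed. $G^{H}(k,s)$ denotes the subgame just before round $k\in[1,T]$ with the HTLC redeemable ($\mathrm{red}$) or already redeemed ($\mathrm{irred}$). A miner's utility in a subgame is the expected tokens she accumulates within it. *)

theory Defs
  imports Complex_Main
begin

text \<open>Last round T of the HTLC game with the HTLC still redeemable, G^H(T,red).
  The selected miner may include: an unrelated transaction (fee f),
  tx^h_A (fee fA) or tx^h_B (fee fB); all three are available in round T.
  Afterwards the game ends.\<close>

datatype htlc_action = Unrelated | IncludeTxA | IncludeTxB

definition fee :: "real \<Rightarrow> real \<Rightarrow> real \<Rightarrow> htlc_action \<Rightarrow> real" where
  "fee f fA fB a = (case a of Unrelated \<Rightarrow> f | IncludeTxA \<Rightarrow> fA | IncludeTxB \<Rightarrow> fB)"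

text \<open>A strategy profile assigns to each miner j < n the action she takes in round T
  if she is selected. Expected utility of miner i in G^H(T,red): miner j is selected
  with probability lam j and only the selected miner receives the fee.\<close>

definition util_last :: "nat \<Rightarrow> (nat \<Rightarrow> real) \<Rightarrow> real \<Rightarrow> real \<Rightarrow> real
    \<Rightarrow> (nat \<Rightarrow> htlc_action) \<Rightarrow> nat \<Rightarrow> real" where
  "util_last n lam f fA fB \<sigma> i =
     (\<Sum>j<n. lam j * (if j = i then fee f fA fB (\<sigma> j) else 0))"

text \<open>Subgame perfect equilibrium of G^H(T,red): at every decision node (miner j
  selected in round T) the chosen action maximises the mover's utility in the subgame
  starting there (the fee of the included transaction, as the game then ends).\<close>

definition spe_last :: "nat \<Rightarrow> real \<Rightarrow> real \<Rightarrow> real \<Rightarrow> (nat \<Rightarrow> htlc_action) \<Rightarrow> bool" where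
  "spe_last n f fA fB \<sigma> \<longleftrightarrow> (\<forall>j<n. \<forall>a. fee f fA fB a \<le> fee f fA fB (\<sigma> j))"

end

theory Submission
  imports Defs
begin

text \<open>Since every mining power is below 1, the bound on the fee of tx^h_B forces
  f < fA < fB. In the last round the game ends after the selected miner's move, so
  including tx^h_B is her unique best action; a miner then earns fB exactly when she is
  selected, i.e. with probability lam i.\<close>

lemma fee_gt_of_scaled_bound:
  fixes m f fA fB :: real
  assumes "0 < m" "m \<le> 1" "f < fA" "(fA - f) / m + f < fB"
  shows "fA < fB"
proof -
  have "fA - f \<le> (fA - f) / m"
    using assms(1-3) by (simp add: le_divide_eq)
  with assms(4) show ?thesis by linarith
qed

lemma Min_image_pos_le_one:
  fixes lam :: "nat \<Rightarrow> real"
  assumes "n \<ge> 1" "\<And>i. i < n \<Longrightarrow> 0 < lam i \<and> lam i < 1"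
  shows "0 < Min (lam ` {..<n})" "Min (lam ` {..<n}) \<le> 1"
proof -
  have "Min (lam ` {..<n}) \<in> lam ` {..<n}"
    using assms(1) by (intro Min_in) (auto simp: lessThan_empty_iff)
  then obtain k where "k < n" "Min (lam ` {..<n}) = lam k" by auto
  with assms(2)[of k] show "0 < Min (lam ` {..<n})" "Min (lam ` {..<n}) \<le> 1" by auto
qed

lemma fee_le_fB:
  assumes "f < fB" "fA < fB"
  shows "fee f fA fB a \<le> fB"
  using assms by (auto simp: fee_def split: htlc_action.split)

lemma fee_eq_fB_iff:
  assumes "f < fB" "fA < fB"
  shows "fee f fA fB a = fB \<longleftrightarrow> a = IncludeTxB"
  using assms by (auto simp: fee_def split: htlc_action.split)

lemma spe_last_iff_all_IncludeTxB:
  assumes "f < fB" "fA < fB"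
  shows "spe_last n f fA fB \<sigma> \<longleftrightarrow> (\<forall>j<n. \<sigma> j = IncludeTxB)"
proof
  assume spe: "spe_last n f fA fB \<sigma>"
  show "\<forall>j<n. \<sigma> j = IncludeTxB"
  proof (intro allI impI)
    fix j assume "j < n"
    with spe have "fee f fA fB IncludeTxB \<le> fee f fA fB (\<sigma> j)"
      unfolding spe_last_def by blast
    with fee_le_fB[OF assms, of "\<sigma> j"] have "fee f fA fB (\<sigma> j) = fB"
      by (simp add: fee_def)
    with fee_eq_fB_iff[OF assms] show "\<sigma> j = IncludeTxB" by blast
  qed
next
  assume "\<forall>j<n. \<sigma> j = IncludeTxB"
  with fee_le_fB[OF assms] show "spe_last n f fA fB \<sigma>"
    unfolding spe_last_def by (simp add: fee_def)
qed

lemma util_last_all_IncludeTxB: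
  assumes "\<forall>j<n. \<sigma> j = IncludeTxB" "i < n"
  shows "util_last n lam f fA fB \<sigma> i = lam i * fB"
proof -
  have "util_last n lam f fA fB \<sigma> i = (\<Sum>j<n. if j = i then lam i * fB else 0)"
    unfolding util_last_def using assms(1) by (intro sum.cong) (auto simp: fee_def)
  also have "\<dots> = lam i * fB"
    using assms(2) by simp
  finally show ?thesis .
qed

theorem lemma8:
  fixes n :: nat and lam :: "nat \<Rightarrow> real" and f fA fB vdep :: real
  assumes "n \<ge> 1"
    and "\<And>i. i < n \<Longrightarrow> 0 < lam i \<and> lam i < 1"
    and "(\<Sum>i<n. lam i) = 1"
    and "f < fA" and "fA < vdep"
    and "fB < vdep"
    and "fB > (fA - f) / Min (lam ` {..<n}) + f"
  shows "(\<forall>\<sigma>. spe_last n f fA fB \<sigma> \<longleftrightarrow> (\<forall>j<n. \<sigma> j = IncludeTxB))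
         \<and> (\<forall>\<sigma>. (\<forall>j<n. \<sigma> j = IncludeTxB) \<longrightarrow>
               (\<forall>i<n. util_last n lam f fA fB \<sigma> i = lam i * fB))"
proof -
  have "fA < fB"
    using Min_image_pos_le_one[of n lam, OF assms(1,2)] assms(4,7)
    by (rule fee_gt_of_scaled_bound)
  moreover have "f < fB"
    using \<open>fA < fB\<close> assms(4) by linarith
  ultimately show ?thesis
    by (simp add: spe_last_iff_all_IncludeTxB util_last_all_IncludeTxB)
qed

end
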